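(* Let $\mathbf A$ be a residuated semigroup balanced over $\mathbf I$. Then $(u_a/u_a)/u_b=(u_a/u_b)/(u_a/u_b)$ holds for all $a,b\in A$ if and only if $I$ has exactly one element.
   Context: A residuated semigroup is a structure $\langle A,\le,\cdot,\backslash,/\rangle$ where $\langle A,\le\rangle$ is a poset, $\langle A,\cdot\rangle$ is a semigroup, and $xy\le z\iff x\le z/y\iff y\le x\backslash z$. An element $p$ is positive if $a\le pa$ and $a\le ap$ for all $a$, idempotent if $pp=p$, central if $pa=ap$ for all $a$. Let $I$ be a nonempty set of central positive idempotents of $\mathbf A$ closed under multiplication ($\mathbf I=\langle I,\cdot\rangle$). $\mathbf A$ is balanced over $\mathbf I$ if for every $a\in A$ the element $u_a:=\max\{p\in I: pa=a\}$ exists (maximum w.r.t. $\le$). *)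

theory Defs
  imports Main
begin

text \<open>A residuated semigroup on the carrier type 'a: le is the partial order,
  mult the semigroup operation, ldiv x z = x\z, rdiv z y = z/y, with
  x*y \<le> z iff x \<le> z/y iff y \<le> x\z.\<close>

definition residuated_semigroup ::
  "('a \<Rightarrow> 'a \<Rightarrow> bool) \<Rightarrow> ('a \<Rightarrow> 'a \<Rightarrow> 'a) \<Rightarrow> ('a \<Rightarrow> 'a \<Rightarrow> 'a) \<Rightarrow> ('a \<Rightarrow> 'a \<Rightarrow> 'a) \<Rightarrow> bool" where
  "residuated_semigroup le mult ldiv rdiv \<longleftrightarrow>
     (\<forall>x. le x x) \<and>
     (\<forall>x y. le x y \<and> le y x \<longrightarrow> x = y) \<and>
     (\<forall>x y z. le x y \<and> le y z \<longrightarrow> le x z) \<and>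
     (\<forall>x y z. mult (mult x y) z = mult x (mult y z)) \<and>
     (\<forall>x y z. (le (mult x y) z \<longleftrightarrow> le x (rdiv z y)) \<and>
              (le (mult x y) z \<longleftrightarrow> le y (ldiv x z)))"

definition positive_el :: "('a \<Rightarrow> 'a \<Rightarrow> bool) \<Rightarrow> ('a \<Rightarrow> 'a \<Rightarrow> 'a) \<Rightarrow> 'a \<Rightarrow> bool" where
  "positive_el le mult p \<longleftrightarrow> (\<forall>a. le a (mult p a) \<and> le a (mult a p))"

definition idempotent_el :: "('a \<Rightarrow> 'a \<Rightarrow> 'a) \<Rightarrow> 'a \<Rightarrow> bool" where
  "idempotent_el mult p \<longleftrightarrow> mult p p = p"

definition central_el :: "('a \<Rightarrow> 'a \<Rightarrow> 'a) \<Rightarrow> 'a \<Rightarrow> bool" where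
  "central_el mult p \<longleftrightarrow> (\<forall>a. mult p a = mult a p)"

definition cpi_set :: "('a \<Rightarrow> 'a \<Rightarrow> bool) \<Rightarrow> ('a \<Rightarrow> 'a \<Rightarrow> 'a) \<Rightarrow> 'a set \<Rightarrow> bool" where
  "cpi_set le mult I \<longleftrightarrow> I \<noteq> {} \<and>
     (\<forall>p\<in>I. central_el mult p \<and> positive_el le mult p \<and> idempotent_el mult p) \<and>
     (\<forall>p\<in>I. \<forall>q\<in>I. mult p q \<in> I)"

definition is_u :: "('a \<Rightarrow> 'a \<Rightarrow> bool) \<Rightarrow> ('a \<Rightarrow> 'a \<Rightarrow> 'a) \<Rightarrow> 'a set \<Rightarrow> 'a \<Rightarrow> 'a \<Rightarrow> bool" where
  "is_u le mult I a p \<longleftrightarrow> p \<in> I \<and> mult p a = a \<and> (\<forall>q\<in>I. mult q a = a \<longrightarrow> le q p)"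

definition balanced :: "('a \<Rightarrow> 'a \<Rightarrow> bool) \<Rightarrow> ('a \<Rightarrow> 'a \<Rightarrow> 'a) \<Rightarrow> 'a set \<Rightarrow> bool" where
  "balanced le mult I \<longleftrightarrow> (\<forall>a. \<exists>p. is_u le mult I a p)"

text \<open>u_a = max {p \<in> I. p a = a} (unique by antisymmetry when it exists).\<close>
definition u_el :: "('a \<Rightarrow> 'a \<Rightarrow> bool) \<Rightarrow> ('a \<Rightarrow> 'a \<Rightarrow> 'a) \<Rightarrow> 'a set \<Rightarrow> 'a \<Rightarrow> 'a" where
  "u_el le mult I a = (THE p. is_u le mult I a p)"

end

theory Submission
  imports Defs
begin

text \<open>For \<open>p \<in> I\<close> we have \<open>u\<^sub>p = p\<close> and \<open>p/p = p\<close>. Given \<open>p, q \<in> I\<close>, put \<open>s = pq \<in> I\<close>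
  and \<open>r = p/s\<close>; the identity at \<open>a = p\<close>, \<open>b = s\<close> says \<open>r/r = r\<close>. Since \<open>s\<close> is a central
  idempotent, \<open>srs = rs \<le> p\<close>, so \<open>sr \<le> r\<close>, i.e. \<open>s \<le> r/r = r\<close>, whence \<open>s = ss \<le> p\<close>.
  By positivity \<open>q \<le> pq = s \<le> p\<close>, so any two elements of \<open>I\<close> coincide. Conversely, if
  \<open>I = {e}\<close> then every \<open>u\<^sub>a\<close> is \<open>e\<close> and both sides of the identity equal \<open>e/e\<close>.\<close>

locale residuated =
  fixes le :: "'a \<Rightarrow> 'a \<Rightarrow> bool" (infix "\<sqsubseteq>" 50)
    and mult :: "'a \<Rightarrow> 'a \<Rightarrow> 'a" (infixl "\<cdot>" 70)
    and ldiv rdiv :: "'a \<Rightarrow> 'a \<Rightarrow> 'a"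
  assumes residuated_semigroup: "residuated_semigroup le mult ldiv rdiv"
begin

lemma refl: "x \<sqsubseteq> x"
  and antisym: "x \<sqsubseteq> y \<Longrightarrow> y \<sqsubseteq> x \<Longrightarrow> x = y"
  and trans: "x \<sqsubseteq> y \<Longrightarrow> y \<sqsubseteq> z \<Longrightarrow> x \<sqsubseteq> z"
  and assoc: "x \<cdot> y \<cdot> z = x \<cdot> (y \<cdot> z)"
  and le_rdiv_iff: "x \<sqsubseteq> rdiv z y \<longleftrightarrow> x \<cdot> y \<sqsubseteq> z"
  using residuated_semigroup unfolding residuated_semigroup_def by blast+

lemma rdiv_self_eq:
  assumes "p \<cdot> p = p" and "\<And>a. a \<sqsubseteq> a \<cdot> p"
  shows "rdiv p p = p"
proof (rule antisym)
  show "rdiv p p \<sqsubseteq> p"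
    using assms(2) le_rdiv_iff refl trans by blast
  show "p \<sqsubseteq> rdiv p p"
    using assms(1) le_rdiv_iff refl by simp
qed

lemma le_of_rdiv_self_fixed:
  assumes central: "\<And>a. s \<cdot> a = a \<cdot> s" and idem: "s \<cdot> s = s"
    and fixed: "rdiv (rdiv p s) (rdiv p s) = rdiv p s"
  shows "s \<sqsubseteq> p"
proof -
  define r where "r = rdiv p s"
  have "r \<cdot> s \<sqsubseteq> p"
    using r_def le_rdiv_iff refl by blast
  moreover have "s \<cdot> r \<cdot> s = r \<cdot> s"
    by (metis assoc central idem)
  ultimately have "s \<cdot> r \<sqsubseteq> r"
    using r_def le_rdiv_iff by simp
  then have "s \<sqsubseteq> r"
    using fixed le_rdiv_iff unfolding r_def by metis
  then have "s \<cdot> s \<sqsubseteq> p"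
    using r_def le_rdiv_iff by simp
  then show ?thesis
    using idem by simp
qed

lemma u_el_eqI: "is_u le mult I a p \<Longrightarrow> u_el le mult I a = p"
  unfolding u_el_def is_u_def by (rule the_equality) (use antisym in blast)+

end

locale balanced_residuated = residuated +
  fixes I :: "'a set"
  assumes cpi_set: "cpi_set le mult I"
    and balanced: "balanced le mult I"
begin

lemma I_nonempty: "I \<noteq> {}"
  and central: "p \<in> I \<Longrightarrow> p \<cdot> a = a \<cdot> p"
  and le_mult_left: "p \<in> I \<Longrightarrow> a \<sqsubseteq> p \<cdot> a"
  and le_mult_right: "p \<in> I \<Longrightarrow> a \<sqsubseteq> a \<cdot> p"
  and idem: "p \<in> I \<Longrightarrow> p \<cdot> p = p"
  and mult_closed: "p \<in> I \<Longrightarrow> q \<in> I \<Longrightarrow> p \<cdot> q \<in> I"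
  using cpi_set unfolding cpi_set_def central_el_def positive_el_def idempotent_el_def
  by blast+

lemma u_el_of_I: "p \<in> I \<Longrightarrow> u_el le mult I p = p"
  by (rule u_el_eqI) (metis is_u_def idem le_mult_right)

lemma rdiv_self_of_I: "p \<in> I \<Longrightarrow> rdiv p p = p"
  by (rule rdiv_self_eq) (auto simp: idem le_mult_right)

lemma u_el_singleton: "I = {e} \<Longrightarrow> u_el le mult I a = e"
  using balanced u_el_eqI unfolding balanced_def is_u_def by blast

lemma singleton_if_rdiv_identity:
  assumes identity: "\<forall>a b. rdiv (rdiv (u_el le mult I a) (u_el le mult I a)) (u_el le mult I b)
              = rdiv (rdiv (u_el le mult I a) (u_el le mult I b))
                     (rdiv (u_el le mult I a) (u_el le mult I b))"
  shows "\<exists>p. I = {p}"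
proof -
  have "q \<sqsubseteq> p" if p: "p \<in> I" and q: "q \<in> I" for p q
  proof -
    have s: "p \<cdot> q \<in> I"
      using mult_closed p q by blast
    have "rdiv (rdiv p (p \<cdot> q)) (rdiv p (p \<cdot> q)) = rdiv p (p \<cdot> q)"
      using identity[rule_format, of p "p \<cdot> q"] u_el_of_I[OF p] u_el_of_I[OF s]
        rdiv_self_of_I[OF p] by simp
    then have "p \<cdot> q \<sqsubseteq> p"
      using le_of_rdiv_self_fixed central[OF s] idem[OF s] by blast
    then show ?thesis
      using le_mult_left[OF p] trans by blast
  qed
  moreover obtain p where "p \<in> I"
    using I_nonempty by blast
  ultimately have "I = {p}"
    using antisym by blast
  then show ?thesis ..
qed

end

theorem lemma6p8:
  fixes le :: "'a \<Rightarrow> 'a \<Rightarrow> bool" and mult ldiv rdiv :: "'a \<Rightarrow> 'a \<Rightarrow> 'a"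
    and I :: "'a set"
  assumes "residuated_semigroup le mult ldiv rdiv"
    and "cpi_set le mult I"
    and "balanced le mult I"
  shows "(\<forall>a b. rdiv (rdiv (u_el le mult I a) (u_el le mult I a)) (u_el le mult I b)
              = rdiv (rdiv (u_el le mult I a) (u_el le mult I b))
                     (rdiv (u_el le mult I a) (u_el le mult I b)))
         \<longleftrightarrow> (\<exists>p. I = {p})"
proof -
  interpret balanced_residuated le mult ldiv rdiv I
    using assms by unfold_locales
  show ?thesis
    using singleton_if_rdiv_identity u_el_singleton rdiv_self_of_I by auto
qed

end
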